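(* Let $B_w$ be the weighted backward shift on $\ell^1$ with weights $w_n=\sqrt{(n+1)/n}$, $n\ge1$. Then $B_w$ is hypercyclic on $\ell^1$ (in the norm topology), but $B_w$ is not $2$-frequently hypercyclic with respect to the weak topology of $\ell^1$ (and in particular not with respect to the norm topology).
   Context: For a bounded sequence $(w_n)_{n\ge1}$ of positive reals, the weighted backward shift $B_w$ on a sequence space over $\mathbb{N}$ is defined by $B_w(e_n)=w_ne_{n-1}$ for $n\ge1$, with $e_0=0$, i.e. $(B_wx)_n=w_{n+1}x_{n+1}$. An operator $T$ on a separable topological vector space $X$ is hypercyclic if some $x$ has dense orbit $\{T^nx:n\ge0\}$. For $q\in\mathbb{N}$, $T$ is $q$-frequently hypercyclic if there is $x\in X$ such that for every nonempty open $U\subset X$ the set $\{n\in\mathbb{N}:T^nx\in U\}$ has positive $q$-lower density, where $q\text{-}\underline{\mathrm{dens}}(A)=\liminf_{N\to\infty}\frac{\mathrm{card}\{n\in A:n\le N^q\}}{N}$; equivalently, for every nonempty open $U$ there are a strictly increasing sequence $(n_k)$ and $C>0$ with $T^{n_k}x\in U$ and $n_k\le Ck^q$ for all $k$. *)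

theory Defs
  imports "HOL-Analysis.Analysis"
begin

text \<open>The sequence space l^1 (complex scalars), sequences indexed from 0.
  Coordinate k corresponds to the paper's index k+1 (paper indexes from 1).\<close>

definition l1 :: "(nat \<Rightarrow> complex) set" where
  "l1 = {x. summable (\<lambda>n. norm (x n))}"

definition l1_norm :: "(nat \<Rightarrow> complex) \<Rightarrow> real" where
  "l1_norm x = (\<Sum>n. norm (x n))"

text \<open>Weighted backward shift B_w(e_n) = w_n e_(n-1) (n \<ge> 1, e_0 = 0) in paper indexing;
  with 0-based coordinates k (paper index k+1): (B_w x)_k = w_(k+2) x_(k+1).\<close>

definition wshift :: "(nat \<Rightarrow> real) \<Rightarrow> (nat \<Rightarrow> complex) \<Rightarrow> (nat \<Rightarrow> complex)" where
  "wshift w x = (\<lambda>k. complex_of_real (w (k + 2)) * x (Suc k))"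

definition l1_norm_open :: "(nat \<Rightarrow> complex) set \<Rightarrow> bool" where
  "l1_norm_open U \<longleftrightarrow> U \<subseteq> l1 \<and>
     (\<forall>x\<in>U. \<exists>\<epsilon>>0. {y \<in> l1. l1_norm (\<lambda>n. y n - x n) < \<epsilon>} \<subseteq> U)"

definition l1_functional :: "((nat \<Rightarrow> complex) \<Rightarrow> complex) \<Rightarrow> bool" where
  "l1_functional f \<longleftrightarrow>
     (\<forall>x\<in>l1. \<forall>y\<in>l1. f (\<lambda>n. x n + y n) = f x + f y) \<and>
     (\<forall>c. \<forall>x\<in>l1. f (\<lambda>n. c * x n) = c * f x) \<and>
     (\<exists>C. \<forall>x\<in>l1. norm (f x) \<le> C * l1_norm x)"

definition l1_weak_open :: "(nat \<Rightarrow> complex) set \<Rightarrow> bool" where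
  "l1_weak_open U \<longleftrightarrow> U \<subseteq> l1 \<and>
     (\<forall>x\<in>U. \<exists>F \<epsilon>. finite F \<and> (\<forall>f\<in>F. l1_functional f) \<and> \<epsilon> > 0 \<and>
        {y \<in> l1. \<forall>f\<in>F. norm (f y - f x) < \<epsilon>} \<subseteq> U)"

definition hypercyclic_l1_norm :: "((nat \<Rightarrow> complex) \<Rightarrow> (nat \<Rightarrow> complex)) \<Rightarrow> bool" where
  "hypercyclic_l1_norm T \<longleftrightarrow>
     (\<exists>x\<in>l1. \<forall>U. l1_norm_open U \<and> U \<noteq> {} \<longrightarrow> (\<exists>n. (T ^^ n) x \<in> U))"

definition q_lower_dens :: "nat \<Rightarrow> nat set \<Rightarrow> ereal" where
  "q_lower_dens q A =
     Liminf sequentially (\<lambda>N. ereal (real (card {n \<in> A. n \<le> N ^ q}) / real N))"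

definition q_freq_hypercyclic_l1_weak ::
    "nat \<Rightarrow> ((nat \<Rightarrow> complex) \<Rightarrow> (nat \<Rightarrow> complex)) \<Rightarrow> bool" where
  "q_freq_hypercyclic_l1_weak q T \<longleftrightarrow>
     (\<exists>x\<in>l1. \<forall>U. l1_weak_open U \<and> U \<noteq> {} \<longrightarrow>
        q_lower_dens q {n. (T ^^ n) x \<in> U} > 0)"

end

theory Submission
  imports Defs
begin

text \<open>
  Everything rests on the closed form of the iterates: the weights telescope, so
  \<open>(B_W^n x)_k = sqrt((k+n+2)/(k+2)) x_(k+n)\<close> (coordinates counted from 0).

  Non-frequent hypercyclicity: the set of vectors with \<open>|y_0| > 1\<close> is weakly open, and
  \<open>B_W^n x\<close> lies in it only if \<open>|x_n| > 1/sqrt((n+2)/2)\<close>.  A counting argument shows that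
  for a summable sequence such indices \<open>n\<close> have 2-lower density zero.

  Hypercyclicity is proved by an explicit construction: the lift \<open>lift N y\<close> is a right
  inverse of \<open>B_W^N\<close>, and lifting a finitely supported vector to a large height makes it
  small in norm.  Summing lifts of a dense sequence of finitely supported targets, placed at
  increasingly separated heights, gives a vector whose orbit comes close to every target.
\<close>

lemma l1_partial_sum_le:
  assumes "finite M" "x \<in> l1"
  shows "(\<Sum>m\<in>M. norm (x m)) \<le> l1_norm x"
  using assms unfolding l1_norm_def by (intro sum_le_suminf) (auto simp: l1_def)

lemma l1_coord_le: "x \<in> l1 \<Longrightarrow> norm (x m) \<le> l1_norm x"
  using l1_partial_sum_le[of "{m}"] by simp

lemma l1_norm_nonneg: "x \<in> l1 \<Longrightarrow> 0 \<le> l1_norm x"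
  unfolding l1_norm_def by (rule suminf_nonneg) (auto simp: l1_def)

lemma l1_add: "x \<in> l1 \<Longrightarrow> y \<in> l1 \<Longrightarrow> (\<lambda>n. x n + y n) \<in> l1"
  unfolding l1_def
proof clarsimp
  assume "summable (\<lambda>n. norm (x n))" "summable (\<lambda>n. norm (y n))"
  hence "summable (\<lambda>n. norm (x n) + norm (y n))" by (rule summable_add)
  thus "summable (\<lambda>n. norm (x n + y n))"
    by (rule summable_comparison_test'[where N=0]) (simp add: norm_triangle_ineq)
qed

lemma l1_triangle:
  assumes "x \<in> l1" "y \<in> l1"
  shows "l1_norm (\<lambda>n. x n + y n) \<le> l1_norm x + l1_norm y"
proof -
  have s: "summable (\<lambda>n. norm (x n))" "summable (\<lambda>n. norm (y n))"
    using assms by (auto simp: l1_def)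
  have "l1_norm (\<lambda>n. x n + y n) \<le> (\<Sum>n. norm (x n) + norm (y n))"
    unfolding l1_norm_def using l1_add[OF assms] s
    by (intro suminf_le) (auto simp: l1_def norm_triangle_ineq intro: summable_add)
  also have "\<dots> = l1_norm x + l1_norm y"
    unfolding l1_norm_def using s by (simp add: suminf_add)
  finally show ?thesis .
qed

lemma l1_diff: "x \<in> l1 \<Longrightarrow> y \<in> l1 \<Longrightarrow> (\<lambda>n. x n - y n) \<in> l1"
  using l1_add[of x "\<lambda>n. - y n"] by (simp add: l1_def)

lemma l1_dist_triangle:
  assumes "x \<in> l1" "y \<in> l1" "z \<in> l1"
  shows "l1_norm (\<lambda>n. x n - z n) \<le> l1_norm (\<lambda>n. x n - y n) + l1_norm (\<lambda>n. y n - z n)"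
  using l1_triangle[OF l1_diff[OF assms(1,2)] l1_diff[OF assms(2,3)]] by simp

lemma l1_finite_support:
  assumes "\<And>k. k \<ge> d \<Longrightarrow> x k = 0"
  shows "x \<in> l1" "l1_norm x = (\<Sum>k<d. norm (x k))"
proof -
  have "(\<lambda>n. norm (x n)) sums (\<Sum>k<d. norm (x k))"
    by (rule sums_finite) (use assms in auto)
  then show "x \<in> l1" "l1_norm x = (\<Sum>k<d. norm (x k))"
    unfolding l1_def l1_norm_def by (auto simp: sums_iff)
qed

lemma l1_series:
  fixes f :: "nat \<Rightarrow> nat \<Rightarrow> complex"
  assumes f: "\<And>j. f j \<in> l1" and s: "summable (\<lambda>j. l1_norm (f j))"
  shows "summable (\<lambda>j. f j m)" "(\<lambda>m. \<Sum>j. f j m) \<in> l1"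
        "l1_norm (\<lambda>m. \<Sum>j. f j m) \<le> (\<Sum>j. l1_norm (f j))"
proof -
  have sn: "summable (\<lambda>j. norm (f j m))" for m
    by (rule summable_comparison_test'[OF s, where N=0]) (use l1_coord_le[OF f] in simp)
  thus "summable (\<lambda>j. f j m)" by (rule summable_norm_cancel)
  have bound: "(\<Sum>m<M. norm (\<Sum>j. f j m)) \<le> (\<Sum>j. l1_norm (f j))" for M
  proof -
    have "(\<Sum>m<M. norm (\<Sum>j. f j m)) \<le> (\<Sum>m<M. \<Sum>j. norm (f j m))"
      by (rule sum_mono) (rule summable_norm[OF sn])
    also have "\<dots> = (\<Sum>j. \<Sum>m<M. norm (f j m))"
      by (rule suminf_sum[symmetric]) (rule sn)
    also have "\<dots> \<le> (\<Sum>j. l1_norm (f j))"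
      by (rule suminf_le) (auto intro: l1_partial_sum_le[OF _ f] summable_sum sn s)
    finally show ?thesis .
  qed
  have sum1: "summable (\<lambda>m. norm (\<Sum>j. f j m))"
    by (rule summableI_nonneg_bounded[OF _ bound]) simp
  thus "(\<lambda>m. \<Sum>j. f j m) \<in> l1" by (simp add: l1_def)
  show "l1_norm (\<lambda>m. \<Sum>j. f j m) \<le> (\<Sum>j. l1_norm (f j))"
    unfolding l1_norm_def[of "\<lambda>m. \<Sum>j. f j m"] by (rule suminf_le_const[OF sum1 bound])
qed

section \<open>Iterates of the weighted shift\<close>

text \<open>The weight sequence of the theorem, in the paper's indexing.\<close>

abbreviation W :: "nat \<Rightarrow> real" where
  "W \<equiv> \<lambda>n. sqrt ((real n + 1) / real n)"

lemma sqrt_ratio_telescope: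
  fixes a b c :: real
  assumes "a > 0"
  shows "sqrt (a / b) * sqrt (c / a) = sqrt (c / b)"
  using assms by (simp add: real_sqrt_mult[symmetric])

lemma iterate_wshift:
  "(wshift W ^^ n) x k = complex_of_real (sqrt ((real k + real n + 2) / (real k + 2))) * x (k + n)"
proof (induction n arbitrary: x)
  case 0
  then show ?case by simp
next
  case (Suc n)
  have "sqrt ((real k + real n + 2) / (real k + 2)) * W (k + n + 2)
      = sqrt ((real k + real n + 2) / (real k + 2)) * sqrt ((real k + real (Suc n) + 2) / (real k + real n + 2))"
    by (simp add: add_ac)
  also have "\<dots> = sqrt ((real k + real (Suc n) + 2) / (real k + 2))"
    by (rule sqrt_ratio_telescope) simp
  finally have factor: "sqrt ((real k + real n + 2) / (real k + 2)) * W (k + n + 2)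
      = sqrt ((real k + real (Suc n) + 2) / (real k + 2))" .
  have "(wshift W ^^ Suc n) x k = (wshift W ^^ n) (wshift W x) k"
    by (simp only: funpow_Suc_right comp_def)
  also have "\<dots> = complex_of_real (sqrt ((real k + real n + 2) / (real k + 2)) * W (k + n + 2)) * x (k + Suc n)"
    by (simp add: Suc.IH wshift_def)
  finally show ?case by (simp only: factor)
qed

section \<open>\<open>B_W\<close> is not 2-frequently hypercyclic for the weak topology\<close>

lemma coordinate_functional: "l1_functional (\<lambda>y. y m)"
  unfolding l1_functional_def using l1_coord_le by (auto intro!: exI[of _ 1])

text \<open>The test set: sequences whose first coordinate has modulus larger than 1.
  It is weakly open, being the preimage of an open set under a coordinate functional.\<close>

definition big_head :: "(nat \<Rightarrow> complex) set" where
  "big_head = {y \<in> l1. 1 < norm (y 0)}"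

lemma big_head_weak_open: "l1_weak_open big_head"
  unfolding l1_weak_open_def
proof (intro conjI ballI)
  show "big_head \<subseteq> l1" by (auto simp: big_head_def)
  fix x assume x: "x \<in> big_head"
  have "{y \<in> l1. norm (y 0 - x 0) < norm (x 0) - 1} \<subseteq> big_head"
  proof clarify
    fix y assume y: "y \<in> l1" "norm (y 0 - x 0) < norm (x 0) - 1"
    have "norm (x 0) \<le> norm (y 0) + norm (y 0 - x 0)"
      by (metis norm_triangle_sub add.commute norm_minus_commute)
    thus "y \<in> big_head" using y by (simp add: big_head_def)
  qed
  then show "\<exists>F \<epsilon>. finite F \<and> (\<forall>f\<in>F. l1_functional f) \<and> \<epsilon> > 0 \<and>
        {y \<in> l1. \<forall>f\<in>F. norm (f y - f x) < \<epsilon>} \<subseteq> big_head"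
    using x coordinate_functional[of 0]
    by (intro exI[of _ "{\<lambda>y. y 0}"] exI[of _ "norm (x 0) - 1"]) (auto simp: big_head_def)
qed

lemma big_head_nonempty: "big_head \<noteq> {}"
proof -
  have "(\<lambda>n. if n = 0 then 2 else 0) \<in> big_head"
    unfolding big_head_def using l1_finite_support(1)[of 1 "\<lambda>n. if n = 0 then 2 else 0"] by auto
  thus ?thesis by auto
qed

text \<open>The factor by which \<open>B_W^n\<close> amplifies the n-th coordinate into the 0-th one
  grows only like \<open>sqrt n\<close>; along times \<open>n \<le> N^2\<close> it is at most \<open>2N\<close>.\<close>

lemma head_factor_bound:
  assumes "n \<le> N^2" "1 \<le> N"
  shows "sqrt ((real n + 2) / 2) \<le> 2 * real N"
proof -
  have "1 \<le> N^2" using assms(2) by simp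
  hence "n + 2 \<le> 8 * N^2" using assms(1) by linarith
  hence "real (n + 2) \<le> real (8 * N^2)" by (rule of_nat_mono)
  hence "(real n + 2) / 2 \<le> (2 * real N)^2" by (simp add: power_mult_distrib)
  hence "sqrt ((real n + 2) / 2) \<le> sqrt ((2 * real N)^2)" by (rule real_sqrt_le_mono)
  also have "sqrt ((2 * real N)^2) = 2 * real N" by (rule real_sqrt_abs[THEN trans]) simp
  finally show ?thesis .
qed

text \<open>Positive 2-lower density means that, however far out one starts, some window
  \<open>[M, N^2]\<close> contains more than \<open>cN/2\<close> elements of the set: about \<open>cN\<close> elements lie
  below \<open>N^2\<close>, and for large \<open>N\<close> at most \<open>cN/2\<close> of them lie below \<open>M\<close>.\<close>

lemma positive_q2_density_windows:
  assumes "q_lower_dens 2 A > 0"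
  obtains c :: real
  where "0 < c" "\<And>M. \<exists>N\<ge>1. c * real N / 2 < real (card {n \<in> A. M \<le> n \<and> n \<le> N^2})"
proof -
  obtain c :: real where c: "0 < c" "ereal c < q_lower_dens 2 A"
    using ereal_dense2[OF assms] by (metis less_ereal.simps(1) zero_ereal_def)
  have "\<forall>\<^sub>F N in sequentially. c < real (card {n \<in> A. n \<le> N ^ 2}) / real N"
    using less_LiminfD[OF c(2)[unfolded q_lower_dens_def]] by simp
  then obtain N0 where N0: "\<And>N. N0 \<le> N \<Longrightarrow> c < real (card {n \<in> A. n \<le> N ^ 2}) / real N"
    unfolding eventually_sequentially by blast
  have "\<exists>N\<ge>1. c * real N / 2 < real (card {n \<in> A. M \<le> n \<and> n \<le> N^2})" for M
  proof -
    define N where "N = max N0 (nat \<lceil>2 * real M / c\<rceil> + 1)"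
    have N: "c < real (card {n \<in> A. n \<le> N ^ 2}) / real N" using N0 by (simp add: N_def)
    have N_large: "nat \<lceil>2 * real M / c\<rceil> + 1 \<le> N" by (simp add: N_def)
    hence N1: "1 \<le> N" by simp
    have "2 * real M / c \<le> real N" using N_large by linarith
    hence M_small: "real M \<le> c * real N / 2" using c(1) by (simp add: field_simps)
    define S where "S = {n \<in> A. M \<le> n \<and> n \<le> N^2}"
    have "{n \<in> A. n \<le> N ^ 2} \<subseteq> {..<M} \<union> S" unfolding S_def by auto
    hence "card {n \<in> A. n \<le> N ^ 2} \<le> card ({..<M} \<union> S)"
      by (rule card_mono[rotated]) (auto simp: S_def)
    also have "\<dots> \<le> M + card S" using card_Un_le[of "{..<M}" S] by simp
    finally have count: "card {n \<in> A. n \<le> N ^ 2} \<le> M + card S" .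
    have "c * real N < real (card {n \<in> A. n \<le> N ^ 2})"
      using N N1 by (simp add: pos_less_divide_eq)
    also have "\<dots> \<le> real M + real (card S)"
      using count by linarith
    finally have "c * real N / 2 < real (card S)" using M_small by linarith
    thus ?thesis using N1 unfolding S_def by blast
  qed
  with c(1) show ?thesis using that by blast
qed

text \<open>If \<open>a\<close> is summable and \<open>a_n > 1/sqrt((n+2)/2)\<close>
  on a set \<open>A\<close>, then \<open>A\<close> has 2-lower density 0: otherwise arbitrarily late windows
  \<open>[M, N^2]\<close> would contain more than \<open>cN/2\<close> indices of \<open>A\<close>, each carrying a term
  \<open>a_n \<ge> 1/(2N)\<close>, so the tails of \<open>\<Sum> a_n\<close> would not fall below \<open>c/4\<close>.\<close>

lemma q2_density_zero_of_summable:
  fixes a :: "nat \<Rightarrow> real"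
  assumes a: "summable a" "\<And>n. 0 \<le> a n"
    and A: "\<And>n. n \<in> A \<Longrightarrow> 1 < sqrt ((real n + 2) / 2) * a n"
  shows "\<not> q_lower_dens 2 A > 0"
proof
  assume "q_lower_dens 2 A > 0"
  then obtain c :: real
    where c: "0 < c" "\<And>M. \<exists>N\<ge>1. c * real N / 2 < real (card {n \<in> A. M \<le> n \<and> n \<le> N^2})"
    by (rule positive_q2_density_windows) blast
  have "c / 4 > 0" using c(1) by simp
  then obtain M where M: "\<And>m K. M \<le> m \<Longrightarrow> norm (sum a {m..<K}) < c / 4"
    using a(1) unfolding summable_Cauchy by blast
  obtain N where N1: "1 \<le> N" and window: "c * real N / 2 < real (card {n \<in> A. M \<le> n \<and> n \<le> N^2})"
    using c(2) by blast
  define S where "S = {n \<in> A. M \<le> n \<and> n \<le> N^2}"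
  have terms: "1 / (2 * real N) \<le> a n" if "n \<in> S" for n
  proof -
    have "1 < sqrt ((real n + 2) / 2) * a n" "sqrt ((real n + 2) / 2) \<le> 2 * real N"
      using that A head_factor_bound N1 by (auto simp: S_def)
    hence "1 \<le> 2 * real N * a n" using a(2)[of n] by (smt (verit) mult_right_mono)
    thus ?thesis using N1 by (simp add: field_simps)
  qed
  have "c / 4 < real (card S) / (2 * real N)"
    using window N1 by (simp add: S_def pos_less_divide_eq)
  also have "\<dots> \<le> sum a S"
    using sum_mono[OF terms] by simp
  also have "\<dots> \<le> sum a {M..<N^2 + 1}"
    by (rule sum_mono2) (auto simp: S_def a(2))
  also have "\<dots> < c / 4"
    using M[of M "N^2 + 1"] a(2) by (simp add: sum_nonneg)
  finally have "c / 4 < c / 4" .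
  then show False by simp
qed

text \<open>Hence no vector returns to \<open>big_head\<close> along a set of positive 2-lower density,
  since \<open>(B_W^n x)_0 = sqrt((n+2)/2) x_n\<close> with \<open>x \<in> l^1\<close>.\<close>

theorem not_2_frequently_hypercyclic: "\<not> q_freq_hypercyclic_l1_weak 2 (wshift W)"
proof
  assume "q_freq_hypercyclic_l1_weak 2 (wshift W)"
  then obtain x where x: "x \<in> l1" and dens: "q_lower_dens 2 {n. (wshift W ^^ n) x \<in> big_head} > 0"
    unfolding q_freq_hypercyclic_l1_weak_def using big_head_weak_open big_head_nonempty by blast
  have "1 < sqrt ((real n + 2) / 2) * norm (x n)" if "n \<in> {n. (wshift W ^^ n) x \<in> big_head}" for n
    using that iterate_wshift[of n x 0] by (simp add: big_head_def norm_mult)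
  moreover have "summable (\<lambda>n. norm (x n))" using x by (simp add: l1_def)
  ultimately show False
    using q2_density_zero_of_summable[of "\<lambda>n. norm (x n)" "{n. (wshift W ^^ n) x \<in> big_head}"] dens
    by simp
qed

section \<open>\<open>B_W\<close> is hypercyclic\<close>

subsection \<open>A right inverse of the shift\<close>

text \<open>\<open>lift N y\<close> is the explicit preimage of \<open>y\<close> under \<open>B_W^N\<close>: \<open>y\<close> moved \<open>N\<close>
  places to the right and damped by the inverse weights.\<close>

definition lift :: "nat \<Rightarrow> (nat \<Rightarrow> complex) \<Rightarrow> nat \<Rightarrow> complex" where
  "lift N y m = (if N \<le> m
     then complex_of_real (sqrt ((real (m - N) + 2) / (real m + 2))) * y (m - N) else 0)"

lemma lift_0 [simp]: "lift 0 y = y"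
  by (rule ext) (simp add: lift_def)

lemma iterate_lift:
  assumes "n \<le> N"
  shows "(wshift W ^^ n) (lift N y) = lift (N - n) y"
proof
  fix k
  show "(wshift W ^^ n) (lift N y) k = lift (N - n) y k"
  proof (cases "N - n \<le> k")
    case True
    define m where "m = k - (N - n)"
    have idx: "N \<le> k + n" "k + n - N = m" using assms True by (auto simp: m_def)
    have "sqrt ((real k + real n + 2) / (real k + 2)) * sqrt ((real m + 2) / (real (k + n) + 2))
        = sqrt ((real m + 2) / (real k + 2))"
      using sqrt_ratio_telescope[of "real k + real n + 2" "real k + 2" "real m + 2"]
      by (simp add: add_ac)
    hence factor: "complex_of_real (sqrt ((real k + real n + 2) / (real k + 2)))
        * complex_of_real (sqrt ((real m + 2) / (real (k + n) + 2)))
        = complex_of_real (sqrt ((real m + 2) / (real k + 2)))"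
      by (simp only: of_real_mult[symmetric])
    have "(wshift W ^^ n) (lift N y) k
        = complex_of_real (sqrt ((real k + real n + 2) / (real k + 2))) * lift N y (k + n)"
      by (rule iterate_wshift)
    also have "lift N y (k + n) = complex_of_real (sqrt ((real m + 2) / (real (k + n) + 2))) * y m"
      using idx unfolding lift_def by simp
    also have "complex_of_real (sqrt ((real k + real n + 2) / (real k + 2))) * \<dots> = lift (N - n) y k"
      using True unfolding mult.assoc[symmetric] factor by (simp add: lift_def m_def)
    finally show ?thesis .
  next
    case False
    then show ?thesis by (simp add: iterate_wshift lift_def)
  qed
qed

lemma iterate_lift_vanishes:
  assumes "N + d \<le> n" "\<And>k. d \<le> k \<Longrightarrow> y k = 0"
  shows "(wshift W ^^ n) (lift N y) k = 0"
  using assms by (simp add: iterate_wshift lift_def)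

text \<open>The damping factors of a lift of height \<open>G\<close> of a vector supported in \<open>[0,d)\<close>
  are all at most \<open>sqrt ((d+2)/(G+2))\<close>; this is what makes high lifts small.\<close>

lemma damping_le:
  assumes "i < d"
  shows "(real i + 2) / (real (i + G) + 2) \<le> (real d + 2) / (real G + 2)"
proof -
  have "real i * real G \<le> real d * real G" using assms by (intro mult_right_mono) auto
  moreover have "(real i + 2) * (real G + 2) = real i * real G + 2 * real i + 2 * real G + 4"
    "(real d + 2) * (real (i + G) + 2)
       = real d * real G + real d * real i + 2 * real d + 2 * real i + 2 * real G + 4"
    by (simp_all add: algebra_simps)
  moreover have "0 \<le> real d * real i" by simp
  ultimately have "(real i + 2) * (real G + 2) \<le> (real d + 2) * (real (i + G) + 2)"
    using assms by linarith
  thus ?thesis by (simp add: divide_simps)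
qed

lemma lift_norm:
  assumes y: "\<And>k. d \<le> k \<Longrightarrow> y k = 0"
  shows "lift G y \<in> l1"
    "l1_norm (lift G y) \<le> sqrt ((real d + 2) / (real G + 2)) * (\<Sum>k<d. norm (y k))"
proof -
  define v where "v = lift G y"
  have v_shifted: "v (i + G) = complex_of_real (sqrt ((real i + 2) / (real (i + G) + 2))) * y i" for i
    by (simp add: v_def lift_def)
  have "(\<lambda>i. norm (v (i + G))) sums (\<Sum>i<d. norm (v (i + G)))"
    by (rule sums_finite) (auto simp: v_shifted y)
  hence "(\<lambda>k. norm (v k)) sums (\<Sum>i<d. norm (v (i + G)))"
    using sums_iff_shift[of "\<lambda>k. norm (v k)" G] by (simp add: v_def lift_def)
  hence v: "v \<in> l1" "l1_norm v = (\<Sum>i<d. norm (v (i + G)))"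
    unfolding l1_def l1_norm_def by (auto simp: sums_iff)
  thus "lift G y \<in> l1" by (simp add: v_def)
  have "(\<Sum>i<d. norm (v (i + G))) \<le> (\<Sum>i<d. sqrt ((real d + 2) / (real G + 2)) * norm (y i))"
  proof (rule sum_mono)
    fix i assume "i \<in> {..<d}"
    hence "sqrt ((real i + 2) / (real (i + G) + 2)) \<le> sqrt ((real d + 2) / (real G + 2))"
      by (intro real_sqrt_le_mono damping_le) simp
    thus "norm (v (i + G)) \<le> sqrt ((real d + 2) / (real G + 2)) * norm (y i)"
      by (simp add: v_shifted norm_mult mult_right_mono)
  qed
  thus "l1_norm (lift G y) \<le> sqrt ((real d + 2) / (real G + 2)) * (\<Sum>k<d. norm (y k))"
    using v by (simp add: v_def sum_distrib_left)
qed

subsection \<open>A dense sequence of finitely supported targets\<close>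

definition rat_vector :: "(rat \<times> rat) list \<Rightarrow> nat \<Rightarrow> complex" where
  "rat_vector l k = (if k < length l then Complex (of_rat (fst (l ! k))) (of_rat (snd (l ! k))) else 0)"

lemma rat_vector_support: "length l \<le> k \<Longrightarrow> rat_vector l k = 0"
  by (simp add: rat_vector_def)

lemma rat_approx:
  fixes a d :: real
  assumes "d > 0"
  shows "\<exists>r::rat. \<bar>of_rat r - a\<bar> < d"
proof -
  obtain q where q: "q \<in> \<rat>" "a - d < q" "q < a + d"
    using Rats_dense_in_real[of "a - d" "a + d"] assms by auto
  then obtain r where "q = of_rat r" by (auto elim: Rats_cases)
  thus ?thesis using q by (intro exI[of _ r]) auto
qed

text \<open>These vectors are norm-dense in l^1: truncate \<open>u\<close> where its tail is small and
  approximate the finitely many remaining coordinates.\<close>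

lemma rat_vectors_dense:
  assumes u: "u \<in> l1" and e: "e > 0"
  shows "\<exists>l. (\<lambda>k. rat_vector l k - u k) \<in> l1 \<and> l1_norm (\<lambda>k. rat_vector l k - u k) < e"
proof -
  obtain K where K: "\<And>m n. m \<ge> K \<Longrightarrow> norm (sum (\<lambda>k. norm (u k)) {m..<n}) < e/2"
  proof -
    have "summable (\<lambda>k. norm (u k))" "e / 2 > 0" using u e by (auto simp: l1_def)
    then show ?thesis using that unfolding summable_Cauchy by blast
  qed
  define \<delta> where "\<delta> = e / (8 * (real K + 1))"
  have \<delta>: "\<delta> > 0" using e by (simp add: \<delta>_def)
  define q where "q a = (SOME r::rat. \<bar>of_rat r - a\<bar> < \<delta>)" for a
  have q: "\<bar>of_rat (q a) - a\<bar> < \<delta>" for a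
    unfolding q_def using rat_approx[OF \<delta>] by (rule someI_ex)
  define l where "l = map (\<lambda>k. (q (Re (u k)), q (Im (u k)))) [0..<K]"
  define h where "h k = norm (rat_vector l k - u k)" for k
  have head: "h k \<le> 2 * \<delta>" if "k < K" for k
  proof -
    have "h k \<le> \<bar>of_rat (q (Re (u k))) - Re (u k)\<bar> + \<bar>of_rat (q (Im (u k))) - Im (u k)\<bar>"
      using that cmod_le[of "rat_vector l k - u k"] by (simp add: h_def rat_vector_def l_def)
    thus ?thesis using q[of "Re (u k)"] q[of "Im (u k)"] by linarith
  qed
  have tail: "h k = norm (u k)" if "K \<le> k" for k
    using that by (simp add: h_def rat_vector_support l_def)
  have partial: "(\<Sum>k<M. h k) \<le> 3 * e / 4" for M
  proof -
    define P where "P = max M K"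
    have "(\<Sum>k<M. h k) \<le> (\<Sum>k<P. h k)"
      by (rule sum_mono2) (auto simp: P_def h_def)
    also have "\<dots> = (\<Sum>k\<in>{0..<K}. h k) + (\<Sum>k\<in>{K..<P}. h k)"
      unfolding lessThan_atLeast0 by (rule sum.atLeastLessThan_concat[symmetric]) (auto simp: P_def)
    also have "(\<Sum>k\<in>{0..<K}. h k) \<le> real K * (2 * \<delta>)"
      using sum_mono[of "{0..<K}" h "\<lambda>_. 2 * \<delta>"] head by simp
    also have "\<dots> \<le> e / 4"
      using e by (simp add: \<delta>_def field_simps)
    also have "(\<Sum>k\<in>{K..<P}. h k) = (\<Sum>k\<in>{K..<P}. norm (u k))" by (simp add: tail)
    also have "\<dots> \<le> e / 2" using K[of K P] by simp
    finally show ?thesis by simp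
  qed
  have "summable h" by (rule summableI_nonneg_bounded[OF _ partial]) (simp add: h_def)
  then show ?thesis
    using suminf_le_const[OF _ partial] e
    by (intro exI[of _ l]) (auto simp: l1_def l1_norm_def h_def[abs_def])
qed

text \<open>An enumeration of all targets in which every target occurs at arbitrarily late positions.\<close>

definition target_code :: "nat \<Rightarrow> (rat \<times> rat) list" where
  "target_code i = from_nat (fst (prod_decode i))"

definition target :: "nat \<Rightarrow> nat \<Rightarrow> complex" where
  "target i = rat_vector (target_code i)"

definition target_len :: "nat \<Rightarrow> nat" where
  "target_len i = length (target_code i)"

lemma target_support: "target_len i \<le> k \<Longrightarrow> target i k = 0"
  by (simp add: target_def target_len_def rat_vector_support)

lemma target_recurs: "\<exists>i\<ge>t. target i = rat_vector l"
  by (intro exI[of _ "prod_encode (to_nat l, t)"])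
     (simp add: target_def target_code_def le_prod_encode_2)

subsection \<open>The hypercyclic vector\<close>

lemma damping_small:
  fixes d G b :: real
  assumes "0 \<le> d" "0 < b" "(d + 2) * b^2 \<le> G"
  shows "sqrt ((d + 2) / (G + 2)) \<le> 1 / b"
proof -
  have pos: "0 < (d + 2) * b^2" using assms by simp
  moreover have le: "(d + 2) * b^2 \<le> G + 2" using assms(3) by linarith
  ultimately have "0 < G + 2" by linarith
  hence prod_pos: "0 < (G + 2) * ((d + 2) * b^2)" using pos by (rule mult_pos_pos)
  have "(d + 2) / (G + 2) \<le> (d + 2) / ((d + 2) * b^2)"
    by (rule divide_left_mono[OF le]) (use assms(1) prod_pos in auto)
  also have "\<dots> = (1 / b)^2" using assms by (simp add: power_one_over)
  finally have "sqrt ((d + 2) / (G + 2)) \<le> sqrt ((1 / b)^2)" by (rule real_sqrt_le_mono)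
  thus ?thesis using assms(2) by simp
qed

definition target_mass :: "nat \<Rightarrow> real" where
  "target_mass j = (\<Sum>k<target_len j. norm (target j k))"

definition gap :: "nat \<Rightarrow> nat" where
  "gap j = nat \<lceil>real (target_len j + 2) * (target_mass j + 1)^2 * 16^j\<rceil>"

fun time :: "nat \<Rightarrow> nat" where
  "time 0 = gap 0"
| "time (Suc j) = time j + target_len j + gap (Suc j)"

lemma gap_le_time: "gap j \<le> time j"
  by (cases j) auto

lemma time_separated: "i < j \<Longrightarrow> time i + target_len i + gap j \<le> time j"
proof (induction j)
  case (Suc j)
  then show ?case by (cases "i = j") auto
qed simp

lemma lift_target_small:
  assumes "gap j \<le> G"
  shows "lift G (target j) \<in> l1" "l1_norm (lift G (target j)) \<le> (1/4)^j"
proof -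
  define Y where "Y = target_mass j"
  define b where "b = (Y + 1) * 4^j"
  have Y: "0 \<le> Y" by (simp add: Y_def target_mass_def sum_nonneg)
  hence b: "0 < b" by (simp add: b_def)
  have "(4::real)^j * 4^j = 16^j" by (simp flip: power_mult_distrib)
  hence "(real (target_len j) + 2) * b^2 = real (target_len j + 2) * (Y + 1)^2 * 16^j"
    by (simp add: b_def power2_eq_square algebra_simps)
  also have "\<dots> \<le> real (gap j)" unfolding gap_def Y_def by (rule real_nat_ceiling_ge)
  also have "\<dots> \<le> real G" using assms by simp
  finally have "(real (target_len j) + 2) * b^2 \<le> real G" .
  hence damp: "sqrt ((real (target_len j) + 2) / (real G + 2)) \<le> 1 / b"
    using damping_small[OF _ b] by simp
  show "lift G (target j) \<in> l1" by (rule lift_norm(1)[OF target_support])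
  have "l1_norm (lift G (target j)) \<le> sqrt ((real (target_len j) + 2) / (real G + 2)) * Y"
    unfolding Y_def target_mass_def by (rule lift_norm(2)[OF target_support])
  also have "\<dots> \<le> 1 / b * (Y + 1)"
    using damp Y b by (intro mult_mono) auto
  also have "\<dots> = (1/4)^j" using Y by (simp add: b_def power_one_over)
  finally show "l1_norm (lift G (target j)) \<le> (1/4)^j" .
qed

definition piece :: "nat \<Rightarrow> nat \<Rightarrow> complex" where
  "piece j = lift (time j) (target j)"

definition hc_vector :: "nat \<Rightarrow> complex" where
  "hc_vector m = (\<Sum>j. piece j m)"

lemma piece_l1: "piece j \<in> l1" "l1_norm (piece j) \<le> (1/4)^j"
  unfolding piece_def using lift_target_small gap_le_time by auto

lemma pieces_summable: "summable (\<lambda>j. l1_norm (piece j))"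
  by (rule summable_comparison_test'[where N=0, OF summable_geometric[of "1/4::real"]])
     (use piece_l1 l1_norm_nonneg in auto)

lemma hc_vector_l1: "hc_vector \<in> l1"
  unfolding hc_vector_def[abs_def] by (rule l1_series(2)[OF piece_l1(1) pieces_summable])

lemma iterate_hc_vector: "(wshift W ^^ n) hc_vector k = (\<Sum>j. (wshift W ^^ n) (piece j) k)"
  using suminf_mult[OF l1_series(1)[OF piece_l1(1) pieces_summable], symmetric]
  by (simp add: iterate_wshift hc_vector_def)

lemma iterate_piece_early:
  assumes "j < i"
  shows "(wshift W ^^ time i) (piece j) k = 0"
proof -
  have "time j + target_len j \<le> time i" using time_separated[OF assms] by simp
  then show ?thesis unfolding piece_def by (rule iterate_lift_vanishes) (rule target_support)
qed

lemma iterate_piece_own: "(wshift W ^^ time i) (piece i) = target i"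
  by (simp add: piece_def iterate_lift)

lemma iterate_piece_late:
  assumes "i < j"
  shows "(wshift W ^^ time i) (piece j) \<in> l1"
    "l1_norm ((wshift W ^^ time i) (piece j)) \<le> (1/2)^i * (1/2)^j"
proof -
  have "time i \<le> time j" "gap j \<le> time j - time i" using time_separated[OF assms] by auto
  hence late: "(wshift W ^^ time i) (piece j) = lift (time j - time i) (target j)"
    by (simp add: piece_def iterate_lift)
  show "(wshift W ^^ time i) (piece j) \<in> l1"
    unfolding late using lift_target_small(1)[OF \<open>gap j \<le> time j - time i\<close>] .
  have "(1/4::real)^j = (1/2)^j * (1/2)^j" by (simp flip: power_mult_distrib)
  also have "\<dots> \<le> (1/2)^i * (1/2)^j" using assms by (intro mult_right_mono power_decreasing) auto
  finally show "l1_norm ((wshift W ^^ time i) (piece j)) \<le> (1/2)^i * (1/2)^j"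
    unfolding late using lift_target_small(2)[OF \<open>gap j \<le> time j - time i\<close>] by linarith
qed

text \<open>Hence the orbit at time \<open>time i\<close> is within \<open>2^(1-i)\<close> of the \<open>i\<close>-th target: the
  difference is the sum of the later pieces.\<close>

lemma orbit_near_target:
  "(\<lambda>k. (wshift W ^^ time i) hc_vector k - target i k) \<in> l1 \<and>
   l1_norm (\<lambda>k. (wshift W ^^ time i) hc_vector k - target i k) \<le> 2 * (1/2)^i"
proof -
  define g where "g j = (if i < j then (wshift W ^^ time i) (piece j) else (\<lambda>_. 0))" for j
  have g: "g j \<in> l1" "l1_norm (g j) \<le> (1/2)^i * (1/2)^j" for j
    using iterate_piece_late[of i j] l1_finite_support[of 0 "\<lambda>_. 0"] by (auto simp: g_def)
  have g_summable: "summable (\<lambda>j. l1_norm (g j))"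
    by (rule summable_comparison_test'[where N=0,
          OF summable_mult[OF summable_geometric[of "1/2::real"]]])
       (use g l1_norm_nonneg in auto)
  have pieces: "(wshift W ^^ time i) (piece j) k = g j k + (if j = i then target i k else 0)" for j k
    by (cases j i rule: linorder_cases) (simp_all add: g_def iterate_piece_early iterate_piece_own)
  have difference: "(wshift W ^^ time i) hc_vector k - target i k = (\<Sum>j. g j k)" for k
  proof -
    have single: "(\<lambda>j. if j = i then target i k else 0) sums target i k"
      using sums_single[of i "\<lambda>_. target i k"] by simp
    have "(wshift W ^^ time i) hc_vector k = (\<Sum>j. g j k + (if j = i then target i k else 0))"
      by (simp add: iterate_hc_vector pieces)
    also have "\<dots> = (\<Sum>j. g j k) + target i k"
      using suminf_add[OF l1_series(1)[OF g(1) g_summable] sums_summable[OF single]]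
        sums_unique[OF single] by simp
    finally show ?thesis by simp
  qed
  have "l1_norm (\<lambda>k. \<Sum>j. g j k) \<le> (\<Sum>j. l1_norm (g j))"
    by (rule l1_series(3)[OF g(1) g_summable])
  also have "\<dots> \<le> (\<Sum>j. (1/2)^i * (1/2::real)^j)"
    by (rule suminf_le) (use g g_summable in \<open>auto intro: summable_mult summable_geometric\<close>)
  also have "\<dots> = 2 * (1/2)^i"
    by (subst suminf_mult) (auto simp: suminf_geometric)
  finally show ?thesis
    unfolding difference using l1_series(2)[OF g(1) g_summable] by blast
qed

text \<open>Every norm-open set contains some target up to an arbitrarily small error, and that
  target recurs at arbitrarily late indices \<open>i\<close>, where the orbit is \<open>2^(1-i)\<close>-close to it.\<close>

theorem hypercyclic: "hypercyclic_l1_norm (wshift W)"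
  unfolding hypercyclic_l1_norm_def
proof (intro bexI[OF _ hc_vector_l1] allI impI)
  fix U assume "l1_norm_open U \<and> U \<noteq> {}"
  then obtain u \<epsilon> where "u \<in> U" "U \<subseteq> l1" "\<epsilon> > 0"
    and ball: "{y \<in> l1. l1_norm (\<lambda>n. y n - u n) < \<epsilon>} \<subseteq> U"
    unfolding l1_norm_open_def by blast
  hence u: "u \<in> l1" by auto
  obtain l where l: "(\<lambda>k. rat_vector l k - u k) \<in> l1" "l1_norm (\<lambda>k. rat_vector l k - u k) < \<epsilon>/2"
    using rat_vectors_dense[OF u, of "\<epsilon>/2"] \<open>\<epsilon> > 0\<close> by auto
  obtain t where t: "(1/2::real)^t < \<epsilon>/4"
    using real_arch_pow_inv[of "\<epsilon>/4" "1/2"] \<open>\<epsilon> > 0\<close> by auto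
  obtain i where i: "t \<le> i" "target i = rat_vector l" using target_recurs by blast
  define v where "v = (wshift W ^^ time i) hc_vector"
  have near: "(\<lambda>k. v k - target i k) \<in> l1" "l1_norm (\<lambda>k. v k - target i k) \<le> 2 * (1/2)^i"
    using orbit_near_target[of i] by (auto simp: v_def)
  have "(1/2::real)^i \<le> (1/2)^t" using i by (intro power_decreasing) auto
  hence near': "l1_norm (\<lambda>k. v k - target i k) < \<epsilon>/2" using near t by linarith
  have target_l1: "target i \<in> l1" by (rule l1_finite_support(1)[OF target_support])
  have "v = (\<lambda>k. (v k - target i k) + target i k)" by simp
  hence v: "v \<in> l1" using l1_add[OF near(1) target_l1] by simp
  have "l1_norm (\<lambda>n. v n - u n) \<le> l1_norm (\<lambda>n. v n - target i n) + l1_norm (\<lambda>n. target i n - u n)"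
    by (rule l1_dist_triangle[OF v target_l1 u])
  hence "l1_norm (\<lambda>n. v n - u n) < \<epsilon>" using near' l i by simp
  hence "v \<in> U" using ball v by blast
  thus "\<exists>n. (wshift W ^^ n) hc_vector \<in> U" unfolding v_def by blast
qed

theorem mainTheorem2:
  defines "w \<equiv> (\<lambda>n::nat. sqrt ((real n + 1) / real n))"
  shows "hypercyclic_l1_norm (wshift w) \<and> \<not> q_freq_hypercyclic_l1_weak 2 (wshift w)"
  unfolding w_def using hypercyclic not_2_frequently_hypercyclic by simp

end
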